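(* The ideal $\mathfrak m$ of $A$ is stable under the action of $\mathfrak h\subset\mathfrak q\times\mathfrak q$.
   Context: Fix $\zeta\in\mathbb{C}$ with $\zeta^2=-1$. Let $\mathbf{V}=\mathbb{C}^{\infty|\infty}$ with even basis $\{e_i\}$, odd basis $\{f_i\}$, odd involution $\alpha(e_i)=f_i,\alpha(f_i)=e_i$. $\mathfrak q$ is the infinite queer Lie superalgebra of finitary matrices $\begin{pmatrix} a & b\\ -b & a\end{pmatrix}$ acting on $\mathbf V$ (basis order: $e$'s then $f$'s), and $\mathfrak q\times\mathfrak q$ acts on $\mathbf V\otimes\mathbf V$ with Koszul signs. $\mathbf U$ is the $\zeta$-eigenspace of $\alpha\otimes\alpha$ on $\mathbf V\otimes\mathbf V$, stable under $\mathfrak q\times\mathfrak q$, with basis $v_{i,j}=(1+\zeta)e_i\otimes e_j+(1-\zeta)f_i\otimes f_j$ and $w_{i,j}=(1+\zeta)e_i\otimes f_j+(1-\zeta)f_i\otimes e_j$. $A=\mathrm{Sym}(\mathbf U)$ is the polynomial superalgebra in even $x_{i,j}$ and odd $y_{i,j}$ corresponding to $v_{i,j},w_{i,j}$, with $\mathfrak q\times\mathfrak q$ acting by superderivations extending its action on $\mathbf U$. $\mathfrak m$ is the ideal generated by all $x_{i,j}-\delta_{i,j}$ and $y_{i,j}$. The Chevalley automorphism is $\tau\begin{pmatrix} a & b\\ -b & a\end{pmatrix}=-\begin{pmatrix} a^t & \zeta b^t\\ -\zeta b^t & a^t\end{pmatrix}$, and $\mathfrak h=\{(\tau g,g):g\in\mathfrak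 q\}$. *)

theory Defs
  imports Complex_Main "HOL-Library.Poly_Mapping" "HOL-Library.FSet"
begin

type_synonym idx = "nat \<times> nat"

text \<open>Basis labels of V: (False, i) is the even vector e_i, (True, i) the odd vector f_i.
  The first component is the parity.\<close>
type_synonym lab = "bool \<times> nat"

text \<open>An element of q is given by its blocks (a, b), representing the matrix
  [[a, b], [-b, a]] (basis order: e's then f's).\<close>
type_synonym qel = "(nat \<Rightarrow> nat \<Rightarrow> complex) \<times> (nat \<Rightarrow> nat \<Rightarrow> complex)"

definition qset :: "qel set" where
  "qset = {(a, b). finite {(i, j). a i j \<noteq> 0} \<and> finite {(i, j). b i j \<noteq> 0}}"

text \<open>Matrix entry of the element (a,b) of q: the coefficient of basis vector m in the
  image of basis vector l.\<close>
definition vmat :: "qel \<Rightarrow> lab \<Rightarrow> lab \<Rightarrow> complex" where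
  "vmat g m l = (case (m, l) of
      ((False, i), (False, j)) \<Rightarrow> fst g i j
    | ((False, i), (True, j)) \<Rightarrow> snd g i j
    | ((True, i), (False, j)) \<Rightarrow> - snd g i j
    | ((True, i), (True, j)) \<Rightarrow> fst g i j)"

definition qeven :: "qel \<Rightarrow> qel" where "qeven g = (fst g, \<lambda>_ _. 0)"
definition qodd :: "qel \<Rightarrow> qel" where "qodd g = ((\<lambda>_ _. 0), snd g)"

text \<open>Chevalley automorphism: tau [[a,b],[-b,a]] = - [[a^t, zeta b^t], [-zeta b^t, a^t]].\<close>
definition tau :: "complex \<Rightarrow> qel \<Rightarrow> qel" where
  "tau \<zeta> g = ((\<lambda>i j. - fst g j i), (\<lambda>i j. - \<zeta> * snd g j i))"

text \<open>Tensors in V (x) V as coefficient functions on pairs of basis labels.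
  Action of a homogeneous pair (X,Y) of parity par (True = odd) on the basis tensor
  l1 (x) l2:  (X,Y)(l1 (x) l2) = X l1 (x) l2 + (-1)^(|Y| |l1|) l1 (x) Y l2.\<close>
definition tact :: "bool \<Rightarrow> qel \<Rightarrow> qel \<Rightarrow> lab \<times> lab \<Rightarrow> lab \<times> lab \<Rightarrow> complex" where
  "tact par X Y l m =
     vmat X (fst m) (fst l) * (if snd m = snd l then 1 else 0)
   + (if par \<and> fst (fst l) then -1 else 1) * (if fst m = fst l then 1 else 0) * vmat Y (snd m) (snd l)"

text \<open>Images of the basis vectors v_ij and w_ij of U.\<close>
definition act_v :: "complex \<Rightarrow> bool \<Rightarrow> qel \<Rightarrow> qel \<Rightarrow> idx \<Rightarrow> lab \<times> lab \<Rightarrow> complex" where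
  "act_v \<zeta> par X Y k m =
     (1 + \<zeta>) * tact par X Y ((False, fst k), (False, snd k)) m
   + (1 - \<zeta>) * tact par X Y ((True, fst k), (True, snd k)) m"

definition act_w :: "complex \<Rightarrow> bool \<Rightarrow> qel \<Rightarrow> qel \<Rightarrow> idx \<Rightarrow> lab \<times> lab \<Rightarrow> complex" where
  "act_w \<zeta> par X Y k m =
     (1 + \<zeta>) * tact par X Y ((False, fst k), (True, snd k)) m
   + (1 - \<zeta>) * tact par X Y ((True, fst k), (False, snd k)) m"

text \<open>A monomial x^alpha y_S: alpha a finitely supported exponent of the even variables x_ij,
  S a finite set of odd variables y_ij, the product of the y's being taken in increasing order
  for the lexicographic order on indices.\<close>
type_synonym mon = "(idx \<Rightarrow>\<^sub>0 nat) \<times> idx fset"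
type_synonym salg = "mon \<Rightarrow>\<^sub>0 complex"

definition idx_less :: "idx \<Rightarrow> idx \<Rightarrow> bool" where
  "idx_less s t \<longleftrightarrow> fst s < fst t \<or> (fst s = fst t \<and> snd s < snd t)"

definition mon_sign :: "idx fset \<Rightarrow> idx fset \<Rightarrow> complex" where
  "mon_sign S T = (-1) ^ card {(s, t). s |\<in>| S \<and> t |\<in>| T \<and> idx_less t s}"

definition mmul :: "mon \<Rightarrow> mon \<Rightarrow> salg" where
  "mmul m1 m2 = (if snd m1 |\<inter>| snd m2 = {||}
     then Poly_Mapping.single (fst m1 + fst m2, snd m1 |\<union>| snd m2) (mon_sign (snd m1) (snd m2))
     else 0)"

definition scal :: "complex \<Rightarrow> salg \<Rightarrow> salg" where
  "scal c p = Poly_Mapping.map (\<lambda>z. c * z) p"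

definition amul :: "salg \<Rightarrow> salg \<Rightarrow> salg" where
  "amul p q = (\<Sum>m1\<in>Poly_Mapping.keys p. \<Sum>m2\<in>Poly_Mapping.keys q. scal (Poly_Mapping.lookup p m1 * Poly_Mapping.lookup q m2) (mmul m1 m2))"

definition mono :: "mon \<Rightarrow> salg" where "mono m = Poly_Mapping.single m 1"
definition aone :: salg where "aone = mono (0, {||})"
definition xvar :: "idx \<Rightarrow> salg" where "xvar k = mono (Poly_Mapping.single k 1, {||})"
definition yvar :: "idx \<Rightarrow> salg" where "yvar k = mono (0, {|k|})"

text \<open>Identification of U with the degree-one part of A: the element
  sum c_ij v_ij + d_ij w_ij of U (given as a tensor t) is sent to sum c_ij x_ij + d_ij y_ij;
  here c_ij = t(e_i,e_j)/(1+zeta) and d_ij = t(e_i,f_j)/(1+zeta).\<close>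
definition toA :: "complex \<Rightarrow> (lab \<times> lab \<Rightarrow> complex) \<Rightarrow> salg" where
  "toA \<zeta> t = Abs_poly_mapping (\<lambda>m.
     if snd m = {||} \<and> (\<exists>k. fst m = Poly_Mapping.single k 1)
       then (let k = (SOME k. fst m = Poly_Mapping.single k 1)
             in t ((False, fst k), (False, snd k)) / (1 + \<zeta>))
     else if fst m = 0 \<and> (\<exists>k. snd m = {|k|})
       then (let k = (SOME k. snd m = {|k|})
             in t ((False, fst k), (True, snd k)) / (1 + \<zeta>))
     else 0)"

text \<open>Superderivation of parity par (True = odd) of A determined by the images dx, dy of the
  generators x_k, y_k, applied to a monomial x^alpha y_S:
  D(x^alpha y_S) = sum_k alpha_k x^(alpha - e_k) D(x_k) y_S
     + sum_(s in S) (-1)^(par * #{t in S. t < s}) x^alpha y_{t<s} D(y_s) y_{t>s}.\<close>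
definition dmon :: "bool \<Rightarrow> (idx \<Rightarrow> salg) \<Rightarrow> (idx \<Rightarrow> salg) \<Rightarrow> mon \<Rightarrow> salg" where
  "dmon par dx dy m =
     (\<Sum>k\<in>Poly_Mapping.keys (fst m). scal (of_nat (Poly_Mapping.lookup (fst m) k))
        (amul (mono (fst m - Poly_Mapping.single k 1, {||})) (amul (dx k) (mono (0, snd m)))))
   + (\<Sum>s\<in>fset (snd m).
        scal (if par then (-1) ^ card {t. t |\<in>| snd m \<and> idx_less t s} else 1)
        (amul (mono (fst m, ffilter (\<lambda>t. idx_less t s) (snd m)))
           (amul (dy s) (mono (0, ffilter (\<lambda>t. idx_less s t) (snd m))))))"

definition dact :: "bool \<Rightarrow> (idx \<Rightarrow> salg) \<Rightarrow> (idx \<Rightarrow> salg) \<Rightarrow> salg \<Rightarrow> salg" where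
  "dact par dx dy p = (\<Sum>m\<in>Poly_Mapping.keys p. scal (Poly_Mapping.lookup p m) (dmon par dx dy m))"

text \<open>Action of a homogeneous pair (X,Y) of parity par on A: the superderivation extending
  the action on U.\<close>
definition hact :: "complex \<Rightarrow> bool \<Rightarrow> qel \<Rightarrow> qel \<Rightarrow> salg \<Rightarrow> salg" where
  "hact \<zeta> par X Y = dact par (\<lambda>k. toA \<zeta> (act_v \<zeta> par X Y k)) (\<lambda>k. toA \<zeta> (act_w \<zeta> par X Y k))"

definition sact :: "complex \<Rightarrow> qel \<times> qel \<Rightarrow> salg \<Rightarrow> salg" where
  "sact \<zeta> XY p = hact \<zeta> False (qeven (fst XY)) (qeven (snd XY)) p
                + hact \<zeta> True (qodd (fst XY)) (qodd (snd XY)) p"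

definition mgens :: "salg set" where
  "mgens = {xvar (i, j) - (if i = j then aone else 0) | i j. True} \<union> range yvar"

inductive_set mfrak :: "salg set" where
  zero: "0 \<in> mfrak"
| step: "p \<in> mfrak \<Longrightarrow> g \<in> mgens \<Longrightarrow> amul (amul a g) b + p \<in> mfrak"

definition hfrak :: "complex \<Rightarrow> (qel \<times> qel) set" where
  "hfrak \<zeta> = {(tau \<zeta> g, g) | g. g \<in> qset}"

end

theory Submission
  imports Defs
begin

(* The point x_ij = delta_ij, y_ij = 0 defines an evaluation aeval : A -> C which is
   multiplicative, and every p differs from the constant aeval p by an element of m; so
   m is the kernel of aeval. For a superderivation D, aeval o D vanishes as soon as it
   vanishes on the generators x_ij, y_ij, and there it reads off the diagonal coefficients
   of the images of v_ij, w_ij in U. For (tau g, g) with g = (a, b) these are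
   (1 + zeta) (a_ij - a_ij) and (1 + zeta) b_ij - (1 - zeta) zeta b_ij = (1 + zeta^2) b_ij,
   both zero. Hence h even maps all of A into m. *)

subsection \<open>Evaluation at the identity point\<close>

definition eval_mon :: "mon \<Rightarrow> complex" where
  "eval_mon m = (if snd m = {||} \<and> (\<forall>k\<in>Poly_Mapping.keys (fst m). fst k = snd k) then 1 else 0)"

definition aeval :: "salg \<Rightarrow> complex" where
  "aeval p = (\<Sum>m\<in>Poly_Mapping.keys p. Poly_Mapping.lookup p m * eval_mon m)"

lemma lookup_scal [simp]: "Poly_Mapping.lookup (scal c p) m = c * Poly_Mapping.lookup p m"
  by (simp add: scal_def Poly_Mapping.map.rep_eq when_def)

lemma keys_scal: "Poly_Mapping.keys (scal c p) \<subseteq> Poly_Mapping.keys p"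
  by (auto simp: in_keys_iff)

lemma scal_0_right [simp]: "scal c 0 = 0"
  by (rule poly_mapping_eqI) simp

lemma scal_0_left [simp]: "scal 0 p = 0"
  by (rule poly_mapping_eqI) simp

lemma scal_add_left: "scal (a + b) p = scal a p + scal b p"
  by (rule poly_mapping_eqI) (simp add: lookup_add ring_distribs)

lemma scal_single [simp]: "scal c (Poly_Mapping.single m d) = Poly_Mapping.single m (c * d)"
  by (rule poly_mapping_eqI) (simp add: lookup_single when_def)

lemma aeval_eq_sum_superset:
  assumes "finite M" "Poly_Mapping.keys p \<subseteq> M"
  shows "aeval p = (\<Sum>m\<in>M. Poly_Mapping.lookup p m * eval_mon m)"
  unfolding aeval_def
  by (rule sum.mono_neutral_left) (use assms in \<open>auto simp: in_keys_iff\<close>)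

lemma aeval_0 [simp]: "aeval 0 = 0"
  by (simp add: aeval_def)

lemma aeval_add: "aeval (p + q) = aeval p + aeval q"
proof -
  let ?M = "Poly_Mapping.keys p \<union> Poly_Mapping.keys q"
  have "aeval (p + q) = (\<Sum>m\<in>?M. Poly_Mapping.lookup (p + q) m * eval_mon m)"
    by (rule aeval_eq_sum_superset) (auto dest: keys_add[THEN subsetD])
  also have "\<dots> = (\<Sum>m\<in>?M. Poly_Mapping.lookup p m * eval_mon m)
                  + (\<Sum>m\<in>?M. Poly_Mapping.lookup q m * eval_mon m)"
    by (simp add: lookup_add ring_distribs sum.distrib)
  also have "\<dots> = aeval p + aeval q"
    by (subst (1 2) aeval_eq_sum_superset[of ?M]) auto
  finally show ?thesis .
qed

lemma aeval_sum: "aeval (sum f A) = (\<Sum>x\<in>A. aeval (f x))"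
  by (induction A rule: infinite_finite_induct) (auto simp: aeval_add)

lemma aeval_scal: "aeval (scal c p) = c * aeval p"
proof -
  have "aeval (scal c p)
          = (\<Sum>m\<in>Poly_Mapping.keys p. Poly_Mapping.lookup (scal c p) m * eval_mon m)"
    by (rule aeval_eq_sum_superset) (auto simp: keys_scal[THEN subsetD])
  then show ?thesis
    by (simp add: aeval_def sum_distrib_left mult.assoc)
qed

lemma aeval_single [simp]: "aeval (Poly_Mapping.single m c) = c * eval_mon m"
  by (simp add: aeval_def)

lemma keys_add_nat:
  "Poly_Mapping.keys ((\<alpha> :: 'a \<Rightarrow>\<^sub>0 nat) + \<beta>) = Poly_Mapping.keys \<alpha> \<union> Poly_Mapping.keys \<beta>"
  by (auto simp: in_keys_iff lookup_add)

lemma aeval_mmul: "aeval (mmul m1 m2) = eval_mon m1 * eval_mon m2"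
  by (cases m1; cases m2) (auto simp: mmul_def eval_mon_def keys_add_nat mon_sign_def)

lemma aeval_amul: "aeval (amul p q) = aeval p * aeval q"
  unfolding amul_def aeval_sum aeval_scal aeval_mmul
  by (simp add: aeval_def sum_product mult_ac)

lemma aeval_dmon_eq_0:
  assumes "\<And>k. aeval (dx k) = 0" "\<And>k. aeval (dy k) = 0"
  shows "aeval (dmon par dx dy m) = 0"
  unfolding dmon_def by (simp add: aeval_add aeval_sum aeval_scal aeval_amul assms)

lemma aeval_dact_eq_0:
  assumes "\<And>k. aeval (dx k) = 0" "\<And>k. aeval (dy k) = 0"
  shows "aeval (dact par dx dy p) = 0"
  unfolding dact_def by (simp add: aeval_sum aeval_scal aeval_dmon_eq_0 assms)

lemma sum_eq_support:
  assumes "finite A" "finite B"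
    and "\<And>x. x \<in> A \<Longrightarrow> x \<notin> B \<Longrightarrow> g x = 0" "\<And>x. x \<in> B \<Longrightarrow> x \<notin> A \<Longrightarrow> g x = 0"
  shows "sum g A = sum g B"
  by (rule sum.mono_neutral_cong) (use assms in auto)

lemma single_one_eq_iff: "Poly_Mapping.single a (1::nat) = Poly_Mapping.single b 1 \<longleftrightarrow> a = b"
proof
  assume "Poly_Mapping.single a (1::nat) = Poly_Mapping.single b 1"
  then have "Poly_Mapping.lookup (Poly_Mapping.single b (1::nat)) a = 1" by (metis lookup_single_eq)
  then show "a = b" by (metis lookup_single_not_eq zero_neq_one)
qed simp

lemma single_Suc_0_eq_iff: "Poly_Mapping.single a (Suc 0) = Poly_Mapping.single b (Suc 0) \<longleftrightarrow> a = b"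
  using single_one_eq_iff by simp

lemma aeval_toA:
  assumes F: "finite F" and supp: "\<And>l1 l2. t (l1, l2) \<noteq> 0 \<Longrightarrow> snd l1 \<in> F \<and> snd l2 \<in> F"
  shows "aeval (toA \<zeta> t) = (\<Sum>i\<in>F. t ((False, i), (False, i))) / (1 + \<zeta>)"
proof -
  define f where "f = (\<lambda>m::mon.
     if snd m = {||} \<and> (\<exists>k. fst m = Poly_Mapping.single k 1)
       then (let k = (SOME k. fst m = Poly_Mapping.single k 1)
             in t ((False, fst k), (False, snd k)) / (1 + \<zeta>))
     else if fst m = 0 \<and> (\<exists>k. snd m = {|k|})
       then (let k = (SOME k. snd m = {|k|})
             in t ((False, fst k), (True, snd k)) / (1 + \<zeta>))
     else 0)"
  have f1: "f (Poly_Mapping.single k 1, {||}) = t ((False, fst k), (False, snd k)) / (1 + \<zeta>)"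
    for k
    by (simp add: f_def single_Suc_0_eq_iff)
  have sub: "{m. f m \<noteq> 0}
              \<subseteq> (\<lambda>k. (Poly_Mapping.single k 1, {||})) ` (F \<times> F) \<union> (\<lambda>k. (0, {|k|})) ` (F \<times> F)"
  proof
    fix m assume "m \<in> {m. f m \<noteq> 0}"
    then have fm: "f m \<noteq> 0" by simp
    obtain al S where m: "m = (al, S)" by (cases m)
    show "m \<in> (\<lambda>k. (Poly_Mapping.single k 1, {||})) ` (F \<times> F)
               \<union> (\<lambda>k. (0, {|k|})) ` (F \<times> F)"
    proof (cases "S = {||} \<and> (\<exists>k. al = Poly_Mapping.single k 1)")
      case True
      then obtain k where k: "al = Poly_Mapping.single k 1" "S = {||}" by blast
      with fm m f1 have "t ((False, fst k), (False, snd k)) \<noteq> 0" by auto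
      then have "k \<in> F \<times> F" using supp by (cases k) fastforce
      then show ?thesis using k m by auto
    next
      case False
      with fm m have c: "al = 0 \<and> (\<exists>k. S = {|k|})" by (auto simp: f_def split: if_splits)
      then obtain k where k: "al = 0" "S = {|k|}" by blast
      with fm m False have "t ((False, fst k), (True, snd k)) \<noteq> 0" by (auto simp: f_def)
      then have "k \<in> F \<times> F" using supp by (cases k) fastforce
      then show ?thesis using k m by auto
    qed
  qed
  have fin: "finite {m. f m \<noteq> 0}" by (rule finite_subset[OF sub]) (use F in auto)
  have lk: "Poly_Mapping.lookup (toA \<zeta> t) = f"
    unfolding toA_def f_def[symmetric] using fin by simp
  define D where "D = (\<lambda>i. (Poly_Mapping.single (i, i) (1::nat), {||} :: idx fset)) ` F"
  have "aeval (toA \<zeta> t) = (\<Sum>m\<in>D. f m * eval_mon m)"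
    unfolding aeval_def lk
  proof (rule sum_eq_support)
    show "finite D" using F by (simp add: D_def)
    fix x assume x: "x \<in> Poly_Mapping.keys (toA \<zeta> t)" "x \<notin> D"
    then have fx: "f x \<noteq> 0" by (simp add: in_keys_iff lk)
    show "f x * eval_mon x = 0"
    proof (rule ccontr)
      assume "f x * eval_mon x \<noteq> 0"
      then have e: "eval_mon x \<noteq> 0" by auto
      then have s: "snd x = {||}" and dg: "\<forall>k\<in>Poly_Mapping.keys (fst x). fst k = snd k"
        by (auto simp: eval_mon_def split: if_splits)
      have "x \<in> (\<lambda>k. (Poly_Mapping.single k 1, {||})) ` (F \<times> F)
                 \<union> (\<lambda>k. (0, {|k|})) ` (F \<times> F)"
        using sub fx by auto
      with s obtain k where k: "k \<in> F \<times> F" "x = (Poly_Mapping.single k 1, {||})" by auto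
      with dg have "fst k = snd k" by simp
      with k have "x \<in> D" unfolding D_def by (cases k) auto
      with x show False by simp
    qed
  next
    fix x assume "x \<in> D" "x \<notin> Poly_Mapping.keys (toA \<zeta> t)"
    then show "f x * eval_mon x = 0" by (simp add: in_keys_iff lk)
  qed simp
  also have "\<dots> = (\<Sum>i\<in>F. f (Poly_Mapping.single (i, i) 1, {||})
                              * eval_mon (Poly_Mapping.single (i, i) 1, {||}))"
    unfolding D_def
    by (rule sum.reindex_cong[where l="\<lambda>i. (Poly_Mapping.single (i, i) (1::nat), {||} :: idx fset)"])
       (auto simp: inj_on_def single_Suc_0_eq_iff)
  also have "\<dots> = (\<Sum>i\<in>F. t ((False, i), (False, i)) / (1 + \<zeta>))"
    using f1 by (simp add: eval_mon_def)
  finally show ?thesis by (simp add: sum_divide_distrib)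
qed

subsection \<open>The identity point is fixed by h\<close>

definition qsupported :: "nat set \<Rightarrow> qel \<Rightarrow> bool" where
  "qsupported F X \<longleftrightarrow> (\<forall>u v. vmat X u v \<noteq> 0 \<longrightarrow> snd u \<in> F \<and> snd v \<in> F)"

lemma qsupportedI:
  assumes A: "\<And>i j. fst X i j \<noteq> 0 \<Longrightarrow> i \<in> F \<and> j \<in> F"
    and B: "\<And>i j. snd X i j \<noteq> 0 \<Longrightarrow> i \<in> F \<and> j \<in> F"
  shows "qsupported F X"
  unfolding qsupported_def
proof (intro allI impI)
  fix u v :: lab assume h: "vmat X u v \<noteq> 0"
  obtain bu i where u: "u = (bu, i)" by (cases u)
  obtain bv j where v: "v = (bv, j)" by (cases v)
  have "fst X i j \<noteq> 0 \<or> snd X i j \<noteq> 0"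
    using h unfolding u v by (cases bu; cases bv) (simp_all add: vmat_def)
  then have "i \<in> F \<and> j \<in> F" using A B by blast
  then show "snd u \<in> F \<and> snd v \<in> F" by (simp add: u v)
qed

lemma tact_nonzero_qsupported:
  assumes X: "qsupported F X" and Y: "qsupported F Y"
    and l: "snd (fst l) \<in> F" "snd (snd l) \<in> F" and t: "tact par X Y l m \<noteq> 0"
  shows "snd (fst m) \<in> F \<and> snd (snd m) \<in> F"
proof -
  have "(vmat X (fst m) (fst l) \<noteq> 0 \<and> snd m = snd l)
        \<or> (fst m = fst l \<and> vmat Y (snd m) (snd l) \<noteq> 0)"
    using t unfolding tact_def
    by (cases "snd m = snd l"; cases "fst m = fst l") (auto split: if_splits)
  then show ?thesis
  proof
    assume h: "vmat X (fst m) (fst l) \<noteq> 0 \<and> snd m = snd l"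
    then have "snd (fst m) \<in> F" using X unfolding qsupported_def by blast
    with h l show ?thesis by simp
  next
    assume h: "fst m = fst l \<and> vmat Y (snd m) (snd l) \<noteq> 0"
    then have "snd (snd m) \<in> F" using Y unfolding qsupported_def by blast
    with h l show ?thesis by simp
  qed
qed

lemma act_v_nonzero_qsupported:
  assumes "qsupported F X" "qsupported F Y" "p \<in> F" "q \<in> F"
    and "act_v \<zeta> par X Y (p, q) (l1, l2) \<noteq> 0"
  shows "snd l1 \<in> F \<and> snd l2 \<in> F"
proof -
  have "tact par X Y ((False, p), (False, q)) (l1, l2) \<noteq> 0
        \<or> tact par X Y ((True, p), (True, q)) (l1, l2) \<noteq> 0"
    using assms(5) by (auto simp: act_v_def)
  then show ?thesis
  proof
    assume "tact par X Y ((False, p), (False, q)) (l1, l2) \<noteq> 0"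
    from tact_nonzero_qsupported[OF assms(1,2) _ _ this] assms(3,4) show ?thesis by simp
  next
    assume "tact par X Y ((True, p), (True, q)) (l1, l2) \<noteq> 0"
    from tact_nonzero_qsupported[OF assms(1,2) _ _ this] assms(3,4) show ?thesis by simp
  qed
qed

lemma act_w_nonzero_qsupported:
  assumes "qsupported F X" "qsupported F Y" "p \<in> F" "q \<in> F"
    and "act_w \<zeta> par X Y (p, q) (l1, l2) \<noteq> 0"
  shows "snd l1 \<in> F \<and> snd l2 \<in> F"
proof -
  have "tact par X Y ((False, p), (True, q)) (l1, l2) \<noteq> 0
        \<or> tact par X Y ((True, p), (False, q)) (l1, l2) \<noteq> 0"
    using assms(5) by (auto simp: act_w_def)
  then show ?thesis
  proof
    assume "tact par X Y ((False, p), (True, q)) (l1, l2) \<noteq> 0"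
    from tact_nonzero_qsupported[OF assms(1,2) _ _ this] assms(3,4) show ?thesis by simp
  next
    assume "tact par X Y ((True, p), (False, q)) (l1, l2) \<noteq> 0"
    from tact_nonzero_qsupported[OF assms(1,2) _ _ this] assms(3,4) show ?thesis by simp
  qed
qed

lemma trace_act_v:
  assumes "finite F" "p \<in> F" "q \<in> F"
  shows "(\<Sum>i\<in>F. act_v \<zeta> par X Y (p, q) ((False, i), (False, i)))
           = (1 + \<zeta>) * (fst X q p + fst Y p q)"
proof -
  have pt: "act_v \<zeta> par X Y (p, q) ((False, i), (False, i))
              = (1 + \<zeta>) * ((if i = q then fst X q p else 0) + (if i = p then fst Y p q else 0))" for i
    by (simp add: act_v_def tact_def vmat_def)
  show ?thesis
    unfolding pt sum_distrib_left[symmetric] sum.distrib using assms by simp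
qed

lemma trace_act_w:
  assumes "finite F" "p \<in> F" "q \<in> F"
  shows "(\<Sum>i\<in>F. act_w \<zeta> par X Y (p, q) ((False, i), (False, i)))
           = (1 + \<zeta>) * snd Y p q + (1 - \<zeta>) * snd X q p"
proof -
  have pt: "act_w \<zeta> par X Y (p, q) ((False, i), (False, i))
              = (1 + \<zeta>) * (if i = p then snd Y p q else 0) + (1 - \<zeta>) * (if i = q then snd X q p else 0)"
    for i
    by (simp add: act_w_def tact_def vmat_def)
  show ?thesis
    unfolding pt sum_distrib_left[symmetric] sum.distrib using assms by simp
qed

lemma qsupported_mono: "qsupported F X \<Longrightarrow> F \<subseteq> G \<Longrightarrow> qsupported G X"
  unfolding qsupported_def by blast

lemma aeval_hact_eq_0:
  assumes F0: "finite F0" and X: "qsupported F0 X" and Y: "qsupported F0 Y"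
    and v_trace: "\<And>p q. fst X q p + fst Y p q = 0"
    and w_trace: "\<And>p q. (1 + \<zeta>) * snd Y p q + (1 - \<zeta>) * snd X q p = 0"
  shows "aeval (hact \<zeta> par X Y r) = 0"
  unfolding hact_def
proof (rule aeval_dact_eq_0)
  fix k :: idx
  obtain p q where k: "k = (p, q)" by (cases k)
  let ?F = "F0 \<union> {p, q}"
  have fin: "finite ?F" using F0 by simp
  have X': "qsupported ?F X" and Y': "qsupported ?F Y"
    using qsupported_mono X Y by blast+
  have "aeval (toA \<zeta> (act_v \<zeta> par X Y k))
          = (\<Sum>i\<in>?F. act_v \<zeta> par X Y k ((False, i), (False, i))) / (1 + \<zeta>)"
    unfolding k
  proof (rule aeval_toA[OF fin])
    fix l1 l2 assume "act_v \<zeta> par X Y (p, q) (l1, l2) \<noteq> 0"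
    then show "snd l1 \<in> ?F \<and> snd l2 \<in> ?F"
      by (rule act_v_nonzero_qsupported[OF X' Y', rotated 2]) simp_all
  qed
  also have "\<dots> = 0" unfolding k by (subst trace_act_v) (auto simp: F0 v_trace)
  finally show "aeval (toA \<zeta> (act_v \<zeta> par X Y k)) = 0" .
  have "aeval (toA \<zeta> (act_w \<zeta> par X Y k))
          = (\<Sum>i\<in>?F. act_w \<zeta> par X Y k ((False, i), (False, i))) / (1 + \<zeta>)"
    unfolding k
  proof (rule aeval_toA[OF fin])
    fix l1 l2 assume "act_w \<zeta> par X Y (p, q) (l1, l2) \<noteq> 0"
    then show "snd l1 \<in> ?F \<and> snd l2 \<in> ?F"
      by (rule act_w_nonzero_qsupported[OF X' Y', rotated 2]) simp_all
  qed
  also have "\<dots> = 0" unfolding k by (subst trace_act_w) (auto simp: F0 w_trace)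
  finally show "aeval (toA \<zeta> (act_w \<zeta> par X Y k)) = 0" .
qed

lemma aeval_sact_hfrak:
  assumes \<zeta>: "\<zeta>\<^sup>2 = -1" and h: "h \<in> hfrak \<zeta>"
  shows "aeval (sact \<zeta> h r) = 0"
proof -
  obtain a b where g: "(a, b) \<in> qset" and h_eq: "h = (tau \<zeta> (a, b), (a, b))"
    using h unfolding hfrak_def by auto
  define F0 where "F0 = fst ` {(i,j). a i j \<noteq> 0} \<union> snd ` {(i,j). a i j \<noteq> 0}
                        \<union> fst ` {(i,j). b i j \<noteq> 0} \<union> snd ` {(i,j). b i j \<noteq> 0}"
  have fin0: "finite F0" using g by (simp add: qset_def F0_def)
  have a_supp: "a i j \<noteq> 0 \<Longrightarrow> i \<in> F0 \<and> j \<in> F0" for i j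
  proof -
    assume "a i j \<noteq> 0"
    then have m: "(i,j) \<in> {(i,j). a i j \<noteq> 0}" by simp
    have "i \<in> fst ` {(i,j). a i j \<noteq> 0}" by (rule image_eqI[OF _ m]) simp
    moreover have "j \<in> snd ` {(i,j). a i j \<noteq> 0}" by (rule image_eqI[OF _ m]) simp
    ultimately show ?thesis unfolding F0_def by blast
  qed
  have b_supp: "b i j \<noteq> 0 \<Longrightarrow> i \<in> F0 \<and> j \<in> F0" for i j
  proof -
    assume "b i j \<noteq> 0"
    then have m: "(i,j) \<in> {(i,j). b i j \<noteq> 0}" by simp
    have "i \<in> fst ` {(i,j). b i j \<noteq> 0}" by (rule image_eqI[OF _ m]) simp
    moreover have "j \<in> snd ` {(i,j). b i j \<noteq> 0}" by (rule image_eqI[OF _ m]) simp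
    ultimately show ?thesis unfolding F0_def by blast
  qed
  have even_part: "aeval (hact \<zeta> False (qeven (tau \<zeta> (a, b))) (qeven (a, b)) r) = 0"
  proof (rule aeval_hact_eq_0[OF fin0])
    show "qsupported F0 (qeven (tau \<zeta> (a, b)))"
      by (rule qsupportedI) (auto simp: qeven_def tau_def dest!: a_supp)
    show "qsupported F0 (qeven (a, b))"
      by (rule qsupportedI) (simp_all add: qeven_def a_supp)
  qed (simp_all add: qeven_def tau_def)
  have "\<zeta> * \<zeta> = -1"
    using \<zeta> by (simp add: power2_eq_square)
  then have odd_trace: "1 + \<zeta> = (1 - \<zeta>) * \<zeta>"
    by (simp add: algebra_simps)
  have odd_part: "aeval (hact \<zeta> True (qodd (tau \<zeta> (a, b))) (qodd (a, b)) r) = 0"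
  proof (rule aeval_hact_eq_0[OF fin0])
    show "qsupported F0 (qodd (tau \<zeta> (a, b)))"
      by (rule qsupportedI) (auto simp: qodd_def tau_def dest!: b_supp)
    show "qsupported F0 (qodd (a, b))"
      by (rule qsupportedI) (simp_all add: qodd_def b_supp)
  qed (simp_all add: qodd_def tau_def odd_trace[symmetric])
  show ?thesis
    unfolding h_eq sact_def using even_part odd_part by (simp add: aeval_add)
qed

subsection \<open>The ideal m is the kernel of the evaluation\<close>

lemma amul_single:
  "amul (Poly_Mapping.single m1 c1) (Poly_Mapping.single m2 c2) = scal (c1 * c2) (mmul m1 m2)"
  by (cases "c1 = 0"; cases "c2 = 0") (simp_all add: amul_def)

lemma amul_eq_sum_superset:
  assumes "finite M1" "Poly_Mapping.keys p \<subseteq> M1" "finite M2" "Poly_Mapping.keys q \<subseteq> M2"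
  shows "amul p q = (\<Sum>m1\<in>M1. \<Sum>m2\<in>M2.
           scal (Poly_Mapping.lookup p m1 * Poly_Mapping.lookup q m2) (mmul m1 m2))"
  unfolding amul_def
  by (intro sum.mono_neutral_cong_left) (use assms in \<open>auto simp: in_keys_iff\<close>)

lemma amul_add_left: "amul (p1 + p2) q = amul p1 q + amul p2 q"
proof -
  let ?M = "Poly_Mapping.keys p1 \<union> Poly_Mapping.keys p2"
  show ?thesis
    by (subst (1 2 3) amul_eq_sum_superset[of ?M _ "Poly_Mapping.keys q"])
      (use keys_add[of p1 p2] in \<open>auto simp: lookup_add ring_distribs scal_add_left sum.distrib\<close>)
qed

lemma amul_add_right: "amul p (q1 + q2) = amul p q1 + amul p q2"
proof -
  let ?M = "Poly_Mapping.keys q1 \<union> Poly_Mapping.keys q2"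
  show ?thesis
    by (subst (1 2 3) amul_eq_sum_superset[of "Poly_Mapping.keys p" _ ?M])
      (use keys_add[of q1 q2] in \<open>auto simp: lookup_add ring_distribs scal_add_left sum.distrib\<close>)
qed

lemma mon_sign_empty [simp]: "mon_sign {||} S = 1" "mon_sign S {||} = 1"
  by (simp_all add: mon_sign_def)

lemma mmul_even: "mmul (\<alpha>, {||}) (\<beta>, {||}) = Poly_Mapping.single (\<alpha> + \<beta>, {||}) 1"
  by (simp add: mmul_def)

lemma mfrak_add: "p \<in> mfrak \<Longrightarrow> q \<in> mfrak \<Longrightarrow> p + q \<in> mfrak"
proof (induction p rule: mfrak.induct)
  case zero
  then show ?case by simp
next
  case (step p g a b)
  then have "amul (amul a g) b + (p + q) \<in> mfrak"
    by (intro mfrak.step)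
  then show ?case
    by (simp add: add.assoc)
qed

lemma update_eq_single_add:
  "a \<notin> Poly_Mapping.keys f \<Longrightarrow> Poly_Mapping.update a b f = Poly_Mapping.single a b + f"
  by (intro poly_mapping_eqI) (auto simp: lookup_update lookup_add lookup_single when_def in_keys_iff)

lemma poly_mapping_nat_induct [case_names zero add_single]:
  fixes \<alpha> :: "'a \<Rightarrow>\<^sub>0 nat"
  assumes "P 0" and add_single: "\<And>k \<alpha>. P \<alpha> \<Longrightarrow> P (Poly_Mapping.single k 1 + \<alpha>)"
  shows "P \<alpha>"
proof (induction \<alpha> rule: update_induct)
  case const
  show ?case by (rule \<open>P 0\<close>)
next
  case (update f a b)
  have "P (Poly_Mapping.single a n + f)" for n
  proof (induction n)
    case 0
    then show ?case using update.IH by simp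
  next
    case (Suc n)
    have "Poly_Mapping.single a (Suc n) + f = Poly_Mapping.single a 1 + (Poly_Mapping.single a n + f)"
      by (metis add.assoc single_add plus_1_eq_Suc)
    then show ?case
      using add_single[OF Suc.IH] by simp
  qed
  then show ?case
    using update.hyps by (simp add: update_eq_single_add)
qed

lemma x_mon_sub_eval_in_mfrak:
  "Poly_Mapping.single (\<alpha>, {||}) c - Poly_Mapping.single (0, {||}) (c * eval_mon (\<alpha>, {||})) \<in> mfrak"
proof (induction \<alpha> arbitrary: c rule: poly_mapping_nat_induct)
  case zero
  show ?case by (simp add: eval_mon_def mfrak.zero)
next
  case (add_single k \<alpha>)
  define d :: complex where "d = (if fst k = snd k then 1 else 0)"
  define g where "g = xvar k - (if fst k = snd k then aone else 0)"
  have "g \<in> mgens"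
    unfolding g_def mgens_def by (cases k) auto
  with add_single.IH
  have "amul (amul (Poly_Mapping.single (0, {||}) c) g) (Poly_Mapping.single (\<alpha>, {||}) 1)
          + (Poly_Mapping.single (\<alpha>, {||}) (c * d)
             - Poly_Mapping.single (0, {||}) (c * d * eval_mon (\<alpha>, {||}))) \<in> mfrak"
    by (rule mfrak.step)
  moreover have "g = Poly_Mapping.single (Poly_Mapping.single k 1, {||}) 1
                     + Poly_Mapping.single (0, {||}) (- d)"
    by (simp add: g_def d_def xvar_def aone_def mono_def single_uminus)
  then have "amul (amul (Poly_Mapping.single (0, {||}) c) g) (Poly_Mapping.single (\<alpha>, {||}) 1)
               = Poly_Mapping.single (Poly_Mapping.single k 1 + \<alpha>, {||}) c
                 + Poly_Mapping.single (\<alpha>, {||}) (- (c * d))"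
    by (simp add: amul_add_right amul_add_left amul_single mmul_even)
  moreover have "eval_mon (Poly_Mapping.single k 1 + \<alpha>, {||}) = d * eval_mon (\<alpha>, {||})"
    by (simp add: eval_mon_def d_def keys_add_nat)
  ultimately show ?case
    by (simp add: single_uminus mult.assoc)
qed

lemma fset_idx_minimal:
  assumes "S \<noteq> {||}"
  obtains s where "s |\<in>| S" "\<And>t. t |\<in>| S \<Longrightarrow> \<not> idx_less t s"
proof -
  have "wf {(t, s). idx_less t s}"
    by (rule wf_subset[OF wf_lex_prod[OF wf_less_than wf_less_than]]) (auto simp: idx_less_def)
  moreover obtain x where "x \<in> fset S"
    using assms by auto
  ultimately obtain s where "s \<in> fset S" "\<And>t. (t, s) \<in> {(t, s). idx_less t s} \<Longrightarrow> t \<notin> fset S"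
    by (rule wfE_min) blast
  then show ?thesis
    using that by blast
qed

lemma odd_mon_in_mfrak:
  assumes "S \<noteq> {||}"
  shows "Poly_Mapping.single (\<alpha>, S) c \<in> mfrak"
proof -
  obtain s where s: "s |\<in>| S" and s_min: "\<And>t. t |\<in>| S \<Longrightarrow> \<not> idx_less t s"
    using fset_idx_minimal[OF assms] by blast
  define T where "T = S |-| {|s|}"
  \<comment> \<open>As s precedes every index of T, y_s y_T = y_S with sign +1.\<close>
  have "{(s', t). s' |\<in>| {|s|} \<and> t |\<in>| T \<and> idx_less t s'} = {}"
    using s_min by (auto simp: T_def)
  then have "mon_sign {|s|} T = 1"
    by (simp only: mon_sign_def) simp
  then have "amul (amul (Poly_Mapping.single (0, {||}) c) (yvar s)) (Poly_Mapping.single (\<alpha>, T) 1)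
               = Poly_Mapping.single (\<alpha>, S) c"
    using s by (simp add: yvar_def mono_def amul_single mmul_def T_def finsert_absorb)
  moreover have "amul (amul (Poly_Mapping.single (0, {||}) c) (yvar s)) (Poly_Mapping.single (\<alpha>, T) 1)
                   + 0 \<in> mfrak"
    by (rule mfrak.step[OF mfrak.zero]) (simp add: mgens_def)
  ultimately show ?thesis
    by simp
qed

lemma mon_sub_eval_in_mfrak:
  "Poly_Mapping.single m c - Poly_Mapping.single (0, {||}) (c * eval_mon m) \<in> mfrak"
proof (cases m)
  case (Pair \<alpha> S)
  then show ?thesis
    using x_mon_sub_eval_in_mfrak[of \<alpha> c] odd_mon_in_mfrak[of S \<alpha> c]
    by (cases "S = {||}") (auto simp: eval_mon_def)
qed

lemma sub_aeval_in_mfrak: "p - Poly_Mapping.single (0, {||}) (aeval p) \<in> mfrak"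
proof (induction p rule: update_induct)
  case const
  then show ?case by (simp add: mfrak.zero)
next
  case (update f m c)
  have "(Poly_Mapping.single m c - Poly_Mapping.single (0, {||}) (c * eval_mon m))
                   + (f - Poly_Mapping.single (0, {||}) (aeval f)) \<in> mfrak"
    using mon_sub_eval_in_mfrak update.IH by (rule mfrak_add)
  then show ?case
    using update.hyps by (simp add: update_eq_single_add aeval_add single_add algebra_simps)
qed

theorem proposition4p3:
  fixes \<zeta> :: complex
  assumes "\<zeta>\<^sup>2 = -1"
  shows "\<forall>h \<in> hfrak \<zeta>. \<forall>p \<in> mfrak. sact \<zeta> h p \<in> mfrak"
proof (intro ballI)
  fix h p
  assume h: "h \<in> hfrak \<zeta>" and "p \<in> mfrak"
  have "aeval (sact \<zeta> h p) = 0"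
    by (rule aeval_sact_hfrak[OF assms h])
  then show "sact \<zeta> h p \<in> mfrak"
    using sub_aeval_in_mfrak[of "sact \<zeta> h p"] by simp
qed

end
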